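(* Let $k$ be a field, $V$ a $k$-vector space, $N\ge2$, $R\subseteq V^{\otimes N}$ a subspace, $A=T(V)/(R)$, $B$ a unital associative $k$-algebra and $M$ an $A$-bimodule which is also a right $B$-module compatible with the $A$-bimodule structure (i.e. $M$ is an $A^e$-$B$-bimodule: the $k$-actions induced by $A$ and $B$ agree and $(a.m.a').b=a.(m.b).a'$). Then for every $q\ge0$, $M\otimes W_{\nu(q)}$ is a right $B$-module via $(m\otimes x_1\dots x_{\nu(q)}).b=(m.b)\otimes x_1\dots x_{\nu(q)}$ (well defined), the Koszul differential $b_K$ is right $B$-linear, and for every Koszul $p$-cochain $f:W_{\nu(p)}\to A$ and every $z\in M\otimes W_{\nu(q)}$ one has $f\underset{K}{\frown}(z.b)=(f\underset{K}{\frown}z).b$ and $(z.b)\underset{K}{\frown}f=(z\underset{K}{\frown}f).b$. Together with the Leibniz rules $b_K(f\underset{K}{\frown}z)=b_K(f)\underset{K}{\frown}z+(-1)^pf\underset{K}{\frown}b_K(z)$ and $b_K(z\underset{K}{\frown}f)=b_K(z)\underset{K}{\frown}f+(-1)^qz\underset{K}{\frown}b_K(f)$, this makes the chain complex $M\otimes W_{\nu(\bullet)}$ a weak DG $\tilde A$-bimodule in the category of right $B$-modules.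
   Context: $W_0=k$, $W_p=V^{\otimes p}$ ($1\le p\le N-1$), $W_p=\bigcap_{i+N+j=p}V^{\otimes i}\otimes R\otimes V^{\otimes j}$ ($p\ge N$); $\nu(2p')=Np'$, $\nu(2p'+1)=Np'+1$. Elements of $W_p$ are written $x_1\dots x_p$ (a sum of such tensors; sub-blocks read in the appropriate $W_r$; $x_i$ act via their images in $A$). Koszul chain differential: $b_K(m\otimes x_1\dots x_{Nq'+1})=mx_1\otimes x_2\dots x_{Nq'+1}-x_{Nq'+1}m\otimes x_1\dots x_{Nq'}$; $b_K(m\otimes x_1\dots x_{Nq'})=\sum_{i=0}^{N-1}x_{i+Nq'-N+2}\dots x_{Nq'}mx_1\dots x_i\otimes x_{i+1}\dots x_{i+Nq'-N+1}$. Koszul cochain differential on $\mathrm{Hom}_k(W_{\nu(p)},A)$: $b_K(f)(x_1\dots x_{Np'+1})=f(x_1\dots x_{Np'})x_{Np'+1}-x_1f(x_2\dots x_{Np'+1})$ ($\deg f=2p'$), $b_K(f)(x_1\dots x_{N(p'+1)})=\sum_{i=0}^{N-1}x_1\dots x_if(x_{i+1}\dots x_{i+Np'+1})x_{i+Np'+2}\dots x_{N(p'+1)}$ ($\deg f=2p'+1$). $\tilde A$ denotes $\mathrm{Hom}_k(W_{\nu(\bullet)},A)$ with $b_K$ and the Koszul cup product (a weak DG algebra: possibly non-associative on cochains). Cap products of $f:W_{\nu(p)}\to A$ and $z=m\otimes x_1\dots x_{\nu(q)}$: if $p$, $q-p$ not both odd, $f\underset{K}{\frown}z=f(x_{\nu(q-p)+1}\dots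 x_{\nu(q)})m\otimes x_1\dots x_{\nu(q-p)}$, $z\underset{K}{\frown}f=(-1)^{pq}mf(x_1\dots x_{\nu(p)})\otimes x_{\nu(p)+1}\dots x_{\nu(q)}$; if $p=2p'+1,q=2q'$: $f\underset{K}{\frown}z=-\sum_{0\le i+j\le N-2}x_{Nq'-Np'-N+i+2}\dots x_{Nq'-Np'-j-1}f(x_{Nq'-Np'-j}\dots x_{Nq'-j})x_{Nq'-j+1}\dots x_{Nq'}mx_1\dots x_i\otimes x_{i+1}\dots x_{i+Nq'-Np'-N+1}$, $z\underset{K}{\frown}f=\sum_{0\le i+j\le N-2}x_{Nq'-j+1}\dots x_{Nq'}mx_1\dots x_if(x_{i+1}\dots x_{Np'+i+1})x_{Np'+i+2}\dots x_{Np'+N-j-1}\otimes x_{Np'+N-j}\dots x_{Nq'-j}$. *)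

theory Defs
  imports Main
begin

text \<open>V is modelled by a basis indexed by the type 'x, so V^{\<otimes>n} is the
space of finitely supported functions on words of length n; a tensor is a function
'x list \<Rightarrow> 'k. M \<otimes> V^{\<otimes>n} is modelled likewise by finitely supported functions
'x list \<Rightarrow> 'm. The algebra A is an abstract k-algebra 'a together with images e x of the
basis vectors such that the induced algebra map T(V) \<rightarrow> A is surjective with kernel (R).\<close>

definition supp :: "('x list \<Rightarrow> 'c::zero) \<Rightarrow> 'x list set" where
  "supp t = {w. t w \<noteq> 0}"

definition tensor :: "nat \<Rightarrow> ('x list \<Rightarrow> 'k::zero) set" where
  "tensor n = {t. finite (supp t) \<and> (\<forall>w. t w \<noteq> 0 \<longrightarrow> length w = n)}"

definition tensalg :: "('x list \<Rightarrow> 'k::zero) set" where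
  "tensalg = {t. finite (supp t)}"

definition tmul :: "('x list \<Rightarrow> 'k::field) \<Rightarrow> ('x list \<Rightarrow> 'k) \<Rightarrow> 'x list \<Rightarrow> 'k" where
  "tmul s t w = (\<Sum>i\<le>length w. s (take i w) * t (drop i w))"

inductive_set lspan :: "('x list \<Rightarrow> 'k::field) set \<Rightarrow> ('x list \<Rightarrow> 'k) set" for S where
  zero: "(\<lambda>_. 0) \<in> lspan S"
| step: "s \<in> S \<Longrightarrow> t \<in> lspan S \<Longrightarrow> (\<lambda>w. c * s w + t w) \<in> lspan S"

definition tsubspace :: "nat \<Rightarrow> ('x list \<Rightarrow> 'k::field) set \<Rightarrow> bool" where
  "tsubspace N R \<longleftrightarrow> R \<subseteq> tensor N \<and> (\<lambda>_. 0) \<in> R \<and>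
     (\<forall>s\<in>R. \<forall>t\<in>R. \<forall>c. (\<lambda>w. c * s w + t w) \<in> R)"

definition Wsp :: "nat \<Rightarrow> ('x list \<Rightarrow> 'k::field) set \<Rightarrow> nat \<Rightarrow> ('x list \<Rightarrow> 'k) set" where
  "Wsp N R p = (if p < N then tensor p else
     \<Inter>{lspan {tmul (tmul u r) v | u r v. u \<in> tensor i \<and> r \<in> R \<and> v \<in> tensor j} | i j. i + N + j = p})"

definition nu :: "nat \<Rightarrow> nat \<Rightarrow> nat" where
  "nu N p = (if even p then N * (p div 2) else N * (p div 2) + 1)"

definition idealR :: "('x list \<Rightarrow> 'k::field) set \<Rightarrow> ('x list \<Rightarrow> 'k) set" where
  "idealR R = lspan {tmul (tmul u r) v | u r v. u \<in> tensalg \<and> r \<in> R \<and> v \<in> tensalg}"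

definition kalg :: "('k::field \<Rightarrow> 'a::ring_1) \<Rightarrow> bool" where
  "kalg \<iota> \<longleftrightarrow> \<iota> 1 = 1 \<and> (\<forall>c d. \<iota> (c + d) = \<iota> c + \<iota> d \<and> \<iota> (c * d) = \<iota> c * \<iota> d)
     \<and> (\<forall>c a. \<iota> c * a = a * \<iota> c)"

definition eprod :: "('x \<Rightarrow> 'a::monoid_mult) \<Rightarrow> 'x list \<Rightarrow> 'a" where
  "eprod e w = prod_list (map e w)"

definition evalT :: "('k::field \<Rightarrow> 'a::ring_1) \<Rightarrow> ('x \<Rightarrow> 'a) \<Rightarrow> ('x list \<Rightarrow> 'k) \<Rightarrow> 'a" where
  "evalT \<iota> e t = (\<Sum>w\<in>supp t. \<iota> (t w) * eprod e w)"

definition presents :: "('k::field \<Rightarrow> 'a::ring_1) \<Rightarrow> ('x \<Rightarrow> 'a) \<Rightarrow> ('x list \<Rightarrow> 'k) set \<Rightarrow> bool" where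
  "presents \<iota> e R \<longleftrightarrow> (\<forall>a. \<exists>t\<in>tensalg. evalT \<iota> e t = a) \<and>
     (\<forall>t\<in>tensalg. evalT \<iota> e t = 0 \<longleftrightarrow> t \<in> idealR R)"

definition bimod :: "('a::ring_1 \<Rightarrow> 'm::ab_group_add \<Rightarrow> 'm) \<Rightarrow> ('m \<Rightarrow> 'a \<Rightarrow> 'm) \<Rightarrow> bool" where
  "bimod la ra \<longleftrightarrow>
     (\<forall>a a' m. la (a * a') m = la a (la a' m)) \<and> (\<forall>m. la 1 m = m) \<and>
     (\<forall>a a' m. la (a + a') m = la a m + la a' m) \<and> (\<forall>a m m'. la a (m + m') = la a m + la a m') \<and>
     (\<forall>a a' m. ra m (a * a') = ra (ra m a) a') \<and> (\<forall>m. ra m 1 = m) \<and>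
     (\<forall>a a' m. ra m (a + a') = ra m a + ra m a') \<and> (\<forall>a m m'. ra (m + m') a = ra m a + ra m' a) \<and>
     (\<forall>a a' m. ra (la a m) a' = la a (ra m a'))"

definition rmod :: "('m::ab_group_add \<Rightarrow> 'b::ring_1 \<Rightarrow> 'm) \<Rightarrow> bool" where
  "rmod rb \<longleftrightarrow>
     (\<forall>b b' m. rb m (b * b') = rb (rb m b) b') \<and> (\<forall>m. rb m 1 = m) \<and>
     (\<forall>b b' m. rb m (b + b') = rb m b + rb m b') \<and> (\<forall>b m m'. rb (m + m') b = rb m b + rb m' b)"

definition compat :: "('k::field \<Rightarrow> 'a::ring_1) \<Rightarrow> ('k \<Rightarrow> 'b::ring_1) \<Rightarrow>
    ('a \<Rightarrow> 'm::ab_group_add \<Rightarrow> 'm) \<Rightarrow> ('m \<Rightarrow> 'a \<Rightarrow> 'm) \<Rightarrow> ('m \<Rightarrow> 'b \<Rightarrow> 'm) \<Rightarrow> bool" where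
  "compat \<iota>A \<iota>B la ra rb \<longleftrightarrow>
     (\<forall>c m. la (\<iota>A c) m = ra m (\<iota>A c) \<and> la (\<iota>A c) m = rb m (\<iota>B c)) \<and>
     (\<forall>a a' m b. rb (ra (la a m) a') b = ra (la a (rb m b)) a')"

text \<open>M \<otimes> W_p, as the span of the elementary tensors m \<otimes> w, w \<in> W_p\<close>
inductive_set MW :: "('k::field \<Rightarrow> 'a::ring_1) \<Rightarrow> ('a \<Rightarrow> 'm::ab_group_add \<Rightarrow> 'm)
    \<Rightarrow> ('x list \<Rightarrow> 'k) set \<Rightarrow> ('x list \<Rightarrow> 'm) set" for \<iota>A la W where
  zero: "(\<lambda>_. 0) \<in> MW \<iota>A la W"
| step: "w \<in> W \<Longrightarrow> z \<in> MW \<iota>A la W \<Longrightarrow> (\<lambda>u. la (\<iota>A (w u)) m + z u) \<in> MW \<iota>A la W"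

definition zB :: "('m \<Rightarrow> 'b \<Rightarrow> 'm) \<Rightarrow> ('x list \<Rightarrow> 'm) \<Rightarrow> 'b \<Rightarrow> 'x list \<Rightarrow> 'm" where
  "zB rb z b = (\<lambda>u. rb (z u) b)"

definition slice :: "nat \<Rightarrow> nat \<Rightarrow> 'x list \<Rightarrow> 'x list" where
  "slice s l w = take l (drop s w)"

definition bKc :: "nat \<Rightarrow> ('x \<Rightarrow> 'a::ring_1) \<Rightarrow> ('a \<Rightarrow> 'm::ab_group_add \<Rightarrow> 'm) \<Rightarrow> ('m \<Rightarrow> 'a \<Rightarrow> 'm)
    \<Rightarrow> nat \<Rightarrow> ('x list \<Rightarrow> 'm) \<Rightarrow> 'x list \<Rightarrow> 'm" where
  "bKc N e la ra q z u =
    (if q = 0 then 0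
     else if odd q then
       (\<Sum>w\<in>supp z. (if tl w = u then ra (z w) (e (hd w)) else 0)
                    - (if butlast w = u then la (e (last w)) (z w) else 0))
     else (let L = nu N q in
       (\<Sum>w\<in>supp z. \<Sum>i<N.
          if slice i (L - N + 1) w = u
          then la (eprod e (drop (i + L - N + 1) w)) (ra (z w) (eprod e (take i w))) else 0)))"

text \<open>Koszul cap products f \<frown> z and z \<frown> f, for f a p-cochain (given by its values on
basis words of length nu(p), i.e. a linear map V^{\<otimes>nu p} \<rightarrow> A) and z of degree q \<ge> p\<close>
definition capL :: "nat \<Rightarrow> ('x \<Rightarrow> 'a::ring_1) \<Rightarrow> ('a \<Rightarrow> 'm::ab_group_add \<Rightarrow> 'm) \<Rightarrow> ('m \<Rightarrow> 'a \<Rightarrow> 'm)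
    \<Rightarrow> nat \<Rightarrow> nat \<Rightarrow> ('x list \<Rightarrow> 'a) \<Rightarrow> ('x list \<Rightarrow> 'm) \<Rightarrow> 'x list \<Rightarrow> 'm" where
  "capL N e la ra p q f z u =
    (if \<not> (odd p \<and> odd (q - p)) then
       (\<Sum>w\<in>supp z. if take (nu N (q - p)) w = u
                     then la (f (drop (nu N (q - p)) w)) (z w) else 0)
     else (let p' = p div 2; q' = q div 2; L = N * q'; D = N * q' - N * p' in
       (\<Sum>w\<in>supp z. \<Sum>(i, j)\<in>{(i, j). i + j \<le> N - 2}.
          if slice i (D - N + 1) w = u
          then - la (eprod e (slice (D - N + 1 + i) (N - i - j - 2) w)
                      * f (slice (D - j - 1) (N * p' + 1) w) * eprod e (drop (L - j) w))
                    (ra (z w) (eprod e (take i w)))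
          else 0)))"

definition capR :: "nat \<Rightarrow> ('x \<Rightarrow> 'a::ring_1) \<Rightarrow> ('a \<Rightarrow> 'm::ab_group_add \<Rightarrow> 'm) \<Rightarrow> ('m \<Rightarrow> 'a \<Rightarrow> 'm)
    \<Rightarrow> nat \<Rightarrow> nat \<Rightarrow> ('x list \<Rightarrow> 'a) \<Rightarrow> ('x list \<Rightarrow> 'm) \<Rightarrow> 'x list \<Rightarrow> 'm" where
  "capR N e la ra p q f z u =
    (if \<not> (odd p \<and> odd (q - p)) then
       (\<Sum>w\<in>supp z. if drop (nu N p) w = u
                     then (if even (p * q) then ra (z w) (f (take (nu N p) w))
                           else - ra (z w) (f (take (nu N p) w))) else 0)
     else (let p' = p div 2; q' = q div 2; L = N * q'; D = N * q' - N * p' in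
       (\<Sum>w\<in>supp z. \<Sum>(i, j)\<in>{(i, j). i + j \<le> N - 2}.
          if slice (N * p' + N - j - 1) (D - N + 1) w = u
          then la (eprod e (drop (L - j) w))
                  (ra (z w) (eprod e (take i w) * f (slice i (N * p' + 1) w)
                              * eprod e (slice (N * p' + i + 1) (N - i - j - 2) w)))
          else 0)))"

end

theory Submission
  imports Defs "HOL.Modules"
begin

text \<open>The right \<open>B\<close>-action on \<open>M \<otimes> W\<close> only touches the \<open>M\<close>-factor, and by the
\<open>A\<^sup>e\<close>-\<open>B\<close>-compatibility it commutes with the left and right \<open>A\<close>-actions on \<open>M\<close>.
Each coefficient of \<open>b\<^sub>K z\<close>, \<open>f \<frown> z\<close> and \<open>z \<frown> f\<close> is a finite sum, over the support of
\<open>z\<close>, of terms obtained from the coefficients of \<open>z\<close> by these actions, sums and negations, so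
all three operators commute with \<open>(-).b\<close>.\<close>

lemma rmod_additive: "rmod rb \<Longrightarrow> additive (\<lambda>m. rb m b)"
  by (simp add: rmod_def additive_def)

lemma bimod_additive_left: "bimod la ra \<Longrightarrow> additive (la a)"
  by (simp add: bimod_def additive_def)

lemma bimod_additive_right: "bimod la ra \<Longrightarrow> additive (\<lambda>m. ra m a)"
  by (simp add: bimod_def additive_def)

lemma bimod_additive_scalar: "bimod la ra \<Longrightarrow> additive (\<lambda>a. la a m)"
  by (simp add: bimod_def additive_def)

lemma bimod_zero:
  assumes "bimod la ra"
  shows "la a 0 = 0" "ra 0 a = 0" "la 0 m = 0"
  using additive.zero[OF bimod_additive_left[OF assms]] additive.zero[OF bimod_additive_right[OF assms]]
    additive.zero[OF bimod_additive_scalar[OF assms]] by blast+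

lemma compat_rb_left:
  assumes "bimod la ra" "compat \<iota>A \<iota>B la ra rb"
  shows "rb (la a m) b = la a (rb m b)"
  using assms unfolding compat_def bimod_def by (metis (no_types))

lemma compat_rb_right:
  assumes "bimod la ra" "compat \<iota>A \<iota>B la ra rb"
  shows "rb (ra m a) b = ra (rb m b) a"
  using assms unfolding compat_def bimod_def by (metis (no_types))

lemma module_action_simps:
  assumes "bimod la ra" "rmod rb" "compat \<iota>A \<iota>B la ra rb"
  shows "rb 0 b = 0" "rb (m + m') b = rb m b + rb m' b" "rb (- m) b = - rb m b"
    "rb (m - m') b = rb m b - rb m' b"
    "rb (sum g I) b = (\<Sum>i\<in>I. rb (g i) b)"
    "rb (if c then m else m') b = (if c then rb m b else rb m' b)"
    "rb (la a m) b = la a (rb m b)" "rb (ra m a) b = ra (rb m b) a"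
    "la a 0 = 0" "ra 0 a = 0"
  using additive.zero[OF rmod_additive[OF assms(2)]] additive.add[OF rmod_additive[OF assms(2)]]
    additive.minus[OF rmod_additive[OF assms(2)]]
    additive.diff[OF rmod_additive[OF assms(2)]] additive.sum[OF rmod_additive[OF assms(2)]]
    compat_rb_left[OF assms(1,3)] compat_rb_right[OF assms(1,3)] bimod_zero[OF assms(1)]
  by simp_all

lemma kalg_zero: "kalg \<iota> \<Longrightarrow> \<iota> 0 = 0"
  unfolding kalg_def by (metis add.right_neutral add_left_cancel)

lemma supp_tmul_subset: "supp (tmul s t) \<subseteq> (\<lambda>(a, b). a @ b) ` (supp s \<times> supp t)"
proof
  fix w assume "w \<in> supp (tmul s t)"
  then obtain i where "s (take i w) * t (drop i w) \<noteq> 0"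
    unfolding supp_def tmul_def by (meson mem_Collect_eq sum.neutral)
  then have "(take i w, drop i w) \<in> supp s \<times> supp t" by (auto simp: supp_def)
  then show "w \<in> (\<lambda>(a, b). a @ b) ` (supp s \<times> supp t)"
    by (metis (no_types, lifting) append_take_drop_id case_prod_conv image_eqI)
qed

lemma finite_supp_tmul: "finite (supp s) \<Longrightarrow> finite (supp t) \<Longrightarrow> finite (supp (tmul s t))"
  by (rule finite_subset[OF supp_tmul_subset]) simp

lemma finite_supp_lspan:
  assumes "t \<in> lspan S" "\<And>s. s \<in> S \<Longrightarrow> finite (supp s)"
  shows "finite (supp t)"
  using assms(1)
proof (induction rule: lspan.induct)
  case zero
  then show ?case by (simp add: supp_def)
next
  case (step s t c)
  have "supp (\<lambda>w. c * s w + t w) \<subseteq> supp s \<union> supp t" by (auto simp: supp_def)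
  with step assms(2) show ?case by (meson finite_Un finite_subset)
qed

lemma finite_supp_Wsp:
  assumes "tsubspace N R" "w \<in> Wsp N R p"
  shows "finite (supp w)"
proof (cases "p < N")
  case True
  with assms(2) show ?thesis by (simp add: Wsp_def tensor_def)
next
  case False
  let ?S = "{tmul (tmul u r) v | u r v. u \<in> tensor 0 \<and> r \<in> R \<and> v \<in> tensor (p - N)}"
  have "lspan ?S \<in> {lspan {tmul (tmul u r) v | u r v. u \<in> tensor i \<and> r \<in> R \<and> v \<in> tensor j}
      | i j. i + N + j = p}"
    using False by (intro CollectI exI[of _ 0] exI[of _ "p - N"]) auto
  then have "w \<in> lspan ?S" using assms(2) False unfolding Wsp_def by auto
  moreover have "finite (supp s)" if "s \<in> ?S" for s
  proof -
    obtain u r v where "s = tmul (tmul u r) v" "u \<in> tensor 0" "r \<in> R" "v \<in> tensor (p - N)"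
      using \<open>s \<in> ?S\<close> by blast
    moreover have "r \<in> tensor N" using assms(1) \<open>r \<in> R\<close> unfolding tsubspace_def by blast
    ultimately show ?thesis by (simp add: tensor_def finite_supp_tmul)
  qed
  ultimately show ?thesis by (rule finite_supp_lspan)
qed

lemma finite_supp_MW:
  assumes "z \<in> MW \<iota>A la W" "\<And>w. w \<in> W \<Longrightarrow> finite (supp w)" "kalg \<iota>A" "bimod la ra"
  shows "finite (supp z)"
  using assms(1)
proof (induction rule: MW.induct)
  case zero
  then show ?case by (simp add: supp_def)
next
  case (step w z m)
  have "supp (\<lambda>u. la (\<iota>A (w u)) m + z u) \<subseteq> supp w \<union> supp z"
    by (auto simp: supp_def kalg_zero[OF assms(3)] bimod_zero[OF assms(4)])
  with step assms(2) show ?case by (meson finite_Un finite_subset)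
qed

lemma zB_in_MW:
  assumes "z \<in> MW \<iota>A la W" "bimod la ra" "rmod rb" "compat \<iota>A \<iota>B la ra rb"
  shows "zB rb z b \<in> MW \<iota>A la W"
  using assms(1)
proof (induction rule: MW.induct)
  case zero
  then show ?case using MW.zero by (simp add: zB_def module_action_simps(1)[OF assms(2-4)])
next
  case (step w z m)
  have "zB rb (\<lambda>u. la (\<iota>A (w u)) m + z u) b = (\<lambda>u. la (\<iota>A (w u)) (rb m b) + zB rb z b u)"
    by (simp add: zB_def module_action_simps[OF assms(2-4)])
  with step show ?case by (simp add: MW.step)
qed

lemma sum_supp_zB:
  assumes "rmod rb" "finite (supp z)"
    and "\<And>w. g w 0 = 0" "\<And>w m. g w (rb m b) = rb (g w m) b"
  shows "(\<Sum>w\<in>supp (zB rb z b). g w (zB rb z b w)) = rb (\<Sum>w\<in>supp z. g w (z w)) b"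
proof -
  interpret rb: additive "\<lambda>m. rb m b" by (rule rmod_additive[OF assms(1)])
  have "supp (zB rb z b) \<subseteq> supp z" by (auto simp: supp_def zB_def rb.zero)
  then have "(\<Sum>w\<in>supp (zB rb z b). g w (zB rb z b w)) = (\<Sum>w\<in>supp z. g w (zB rb z b w))"
    by (rule sum.mono_neutral_left[OF assms(2)]) (simp add: supp_def assms(3))
  also have "\<dots> = rb (\<Sum>w\<in>supp z. g w (z w)) b" by (simp add: zB_def assms(4) rb.sum)
  finally show ?thesis .
qed

lemma bKc_zB:
  assumes "bimod la ra" "rmod rb" "compat \<iota>A \<iota>B la ra rb" "finite (supp z)"
  shows "bKc N e la ra q (zB rb z b) = zB rb (bKc N e la ra q z) b"
  unfolding fun_eq_iff bKc_def zB_def[of rb "bKc N e la ra q z"] Let_def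
  by (auto intro!: sum_supp_zB[OF assms(2,4)] simp: module_action_simps(1)[OF assms(1-3)];
      simp add: module_action_simps[OF assms(1-3)] case_prod_beta cong: if_cong)

lemma capL_zB:
  assumes "bimod la ra" "rmod rb" "compat \<iota>A \<iota>B la ra rb" "finite (supp z)"
  shows "capL N e la ra p q f (zB rb z b) = zB rb (capL N e la ra p q f z) b"
  unfolding fun_eq_iff capL_def zB_def[of rb "capL N e la ra p q f z"] Let_def
  by (auto intro!: sum_supp_zB[OF assms(2,4)] simp: module_action_simps(1)[OF assms(1-3)];
      simp add: module_action_simps[OF assms(1-3)] case_prod_beta cong: if_cong)

lemma capR_zB:
  assumes "bimod la ra" "rmod rb" "compat \<iota>A \<iota>B la ra rb" "finite (supp z)"
  shows "capR N e la ra p q f (zB rb z b) = zB rb (capR N e la ra p q f z) b"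
  unfolding fun_eq_iff capR_def zB_def[of rb "capR N e la ra p q f z"] Let_def
  by (auto intro!: sum_supp_zB[OF assms(2,4)] simp: module_action_simps(1)[OF assms(1-3)];
      simp add: module_action_simps[OF assms(1-3)] case_prod_beta cong: if_cong)

theorem proposition8p3:
  fixes \<iota>A :: "'k::field \<Rightarrow> 'a::ring_1" and \<iota>B :: "'k \<Rightarrow> 'b::ring_1"
    and e :: "'x \<Rightarrow> 'a" and R :: "('x list \<Rightarrow> 'k) set" and N :: nat
    and la :: "'a \<Rightarrow> 'm::ab_group_add \<Rightarrow> 'm" and ra :: "'m \<Rightarrow> 'a \<Rightarrow> 'm"
    and rb :: "'m \<Rightarrow> 'b \<Rightarrow> 'm"
  assumes "N \<ge> 2" and "kalg \<iota>A" and "kalg \<iota>B" and "tsubspace N R"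
    and "presents \<iota>A e R" and "bimod la ra" and "rmod rb" and "compat \<iota>A \<iota>B la ra rb"
  shows "(\<forall>q z z' b b'. z \<in> MW \<iota>A la (Wsp N R (nu N q)) \<longrightarrow> z' \<in> MW \<iota>A la (Wsp N R (nu N q)) \<longrightarrow>
           zB rb z b \<in> MW \<iota>A la (Wsp N R (nu N q))
         \<and> zB rb z (b * b') = zB rb (zB rb z b) b'
         \<and> zB rb z 1 = z
         \<and> zB rb z (b + b') = (\<lambda>u. zB rb z b u + zB rb z b' u)
         \<and> zB rb (\<lambda>u. z u + z' u) b = (\<lambda>u. zB rb z b u + zB rb z' b u))
    \<and> (\<forall>q z b. z \<in> MW \<iota>A la (Wsp N R (nu N q)) \<longrightarrow>
           bKc N e la ra q (zB rb z b) = zB rb (bKc N e la ra q z) b)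
    \<and> (\<forall>p q f z b. p \<le> q \<longrightarrow> z \<in> MW \<iota>A la (Wsp N R (nu N q)) \<longrightarrow>
           capL N e la ra p q f (zB rb z b) = zB rb (capL N e la ra p q f z) b
         \<and> capR N e la ra p q f (zB rb z b) = zB rb (capR N e la ra p q f z) b)"
proof -
  have finite_supp: "finite (supp z)" if "z \<in> MW \<iota>A la (Wsp N R (nu N q))" for z q
    using that finite_supp_MW finite_supp_Wsp assms(2,4,6) by metis
  have rmod_laws: "zB rb z (b * b') = zB rb (zB rb z b) b'" "zB rb z 1 = z"
    "zB rb z (b + b') = (\<lambda>u. zB rb z b u + zB rb z b' u)"
    "zB rb (\<lambda>u. z u + z' u) b = (\<lambda>u. zB rb z b u + zB rb z' b u)" for z z' :: "'x list \<Rightarrow> 'm" and b b'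
    using assms(7) by (simp_all add: zB_def rmod_def)
  show ?thesis
    by (intro conjI allI impI)
      (simp_all add: zB_in_MW[OF _ assms(6-8)] rmod_laws bKc_zB[OF assms(6-8) finite_supp]
        capL_zB[OF assms(6-8) finite_supp] capR_zB[OF assms(6-8) finite_supp])
qed

end
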